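(* Let $i$ be a non-negative integer with $i\not\equiv 2 \pmod 3$, let $k=2i^2+7i+6$ and $m=2k+1$. Then there exists a cyclic DCA$(4,2m+1;2m)$ satisfying P1 and P2 (so these give an infinite family).
   Context: A difference covering array DCA$(k,\eta;n)$ over $\mathbb{Z}_n$ (a cyclic DCA) is an $\eta\times k$ matrix $Q=[q(i,j)]$ with entries in $\mathbb{Z}_n$ such that for every pair of distinct columns $j,j'$ the multiset $\{q(i,j)-q(i,j') : 0\le i\le \eta-1\}$ contains every element of $\mathbb{Z}_n$ at least once. A DCA$(k,n+1;n)$ is taken in normalized form: all entries of its last row (row $n$) and last column (column $k-1$) equal $0$. It satisfies P1 if $0$ occurs at least twice in every column, and P2 if for all distinct columns $j,j'$ with $j\neq k-1\neq j'$, the set $\{q(i,j)-q(i,j') : 0\le i\le n-1\}$ equals $\mathbb{Z}_n\setminus\{0\}$. (Here the letter $k$ in the claim denotes the integer $2i^2+7i+6$, while the first parameter of the DCA is $4$.) *)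

theory Defs
  imports Main
begin

text \<open>An eta x k matrix over Z_n is modelled as a function Q :: nat => nat => nat
  (row index, column index) whose entries on rows < eta and columns < k lie in {0..<n};
  residues of Z_n are represented by their canonical representatives 0..n-1, and
  the difference q - q' in Z_n is (q + n - q') mod n.\<close>

definition zdiff :: "nat \<Rightarrow> nat \<Rightarrow> nat \<Rightarrow> nat" where
  "zdiff n a b = (a + n - b) mod n"

definition is_DCA :: "nat \<Rightarrow> nat \<Rightarrow> nat \<Rightarrow> (nat \<Rightarrow> nat \<Rightarrow> nat) \<Rightarrow> bool" where
  "is_DCA k eta n Q \<longleftrightarrow>
     (\<forall>i<eta. \<forall>j<k. Q i j < n) \<and>
     (\<forall>j<k. \<forall>j'<k. j \<noteq> j' \<longrightarrow> (\<forall>d<n. \<exists>i<eta. zdiff n (Q i j) (Q i j') = d))"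

definition normalized_DCA :: "nat \<Rightarrow> nat \<Rightarrow> (nat \<Rightarrow> nat \<Rightarrow> nat) \<Rightarrow> bool" where
  "normalized_DCA k n Q \<longleftrightarrow>
     is_DCA k (n + 1) n Q \<and> (\<forall>j<k. Q n j = 0) \<and> (\<forall>i<n + 1. Q i (k - 1) = 0)"

definition DCA_P1 :: "nat \<Rightarrow> nat \<Rightarrow> (nat \<Rightarrow> nat \<Rightarrow> nat) \<Rightarrow> bool" where
  "DCA_P1 k eta Q \<longleftrightarrow> (\<forall>j<k. 2 \<le> card {i. i < eta \<and> Q i j = 0})"

definition DCA_P2 :: "nat \<Rightarrow> nat \<Rightarrow> (nat \<Rightarrow> nat \<Rightarrow> nat) \<Rightarrow> bool" where
  "DCA_P2 k n Q \<longleftrightarrow>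
     (\<forall>j<k. \<forall>j'<k. j \<noteq> j' \<and> j \<noteq> k - 1 \<and> j' \<noteq> k - 1 \<longrightarrow>
        {zdiff n (Q i j) (Q i j') | i. i < n} = {1..<n})"

end

theory Submission
  imports Defs
begin

text \<open>
  Put \<open>x = 2i + 3\<close> and \<open>M = x\<^sup>2 + x + 1 = m\<close>. As \<open>M\<close> is odd,
  \<open>\<int>\<^sub>2\<^sub>M \<cong> \<int>\<^sub>2 \<times> \<int>\<^sub>M\<close>; the rows other than the zero row are indexed by
  \<open>(e, r) \<in> \<int>\<^sub>2 \<times> \<int>\<^sub>M\<close>, and columns 0, 1, 2 have \<open>\<int>\<^sub>M\<close>-components \<open>r\<close>, \<open>x r\<close>,
  \<open>x\<^sup>2 r\<close>, shifted by \<open>x - x\<^sup>2\<close> in two places. Since \<open>x\<^sup>3 \<equiv> 1 (mod M)\<close>, the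
  difference of two columns in row \<open>(e, r)\<close> has \<open>\<int>\<^sub>M\<close>-component \<open>a (r - c\<^sub>e)\<close> with
  \<open>a \<in> {1 - x, 1 - x\<^sup>2, x - x\<^sup>2}\<close>, and these are units modulo \<open>M\<close> exactly when
  3 does not divide \<open>M\<close>, i.e. when \<open>i mod 3 \<noteq> 2\<close>.

  The \<open>\<int>\<^sub>2\<close>-components are built from the parity of the representative of \<open>r\<close>
  in \<open>{1, \<dots>, M}\<close>, which changes from \<open>r\<close> to \<open>r + 1\<close> unless \<open>r \<equiv> 0\<close>. Hence for
  every residue \<open>t\<close> the two rows whose difference has \<open>\<int>\<^sub>M\<close>-component \<open>t\<close> carry
  different parities, so each nonzero difference occurs; and when the \<open>\<int>\<^sub>M\<close>-component
  is \<open>0\<close> the parity is odd, so the difference \<open>0\<close> never occurs (P2). Each column on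
  its own is onto \<open>\<int>\<^sub>2\<^sub>M\<close>, which handles the zero column and gives P1.
\<close>

lemma zdiff_eq:
  assumes "a < n" "b < n"
  shows "zdiff n a b = (if b \<le> a then a - b else a + n - b)"
  using assms by (auto simp: zdiff_def le_mod_geq)

lemma zdiff_less: "0 < n \<Longrightarrow> zdiff n a b < n"
  by (simp add: zdiff_def)

lemma zdiff_eq_0_iff: "a < n \<Longrightarrow> b < n \<Longrightarrow> zdiff n a b = 0 \<longleftrightarrow> a = b"
  by (simp add: zdiff_eq)

lemma zdiff_swap:
  assumes "a < n" "b < n" "a \<noteq> b"
  shows "zdiff n b a = n - zdiff n a b"
  using assms by (auto simp: zdiff_eq)

lemma not_dvd_factor:
  fixes m a v t :: int
  assumes "m dvd a * v - t" "\<not> m dvd t"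
  shows "\<not> m dvd v"
proof
  assume "m dvd v"
  then have "m dvd a * v - (a * v - t)"
    using assms(1) by (rule dvd_diff[OF dvd_mult])
  then show False
    using assms(2) by simp
qed

lemma dvd_cancel_unit:
  fixes m a b r :: int
  assumes "m dvd a * b - 1" "m dvd a * r"
  shows "m dvd r"
  using assms by algebra

locale odd_modulus =
  fixes M :: int
  assumes odd_M: "odd M" and M_pos: "0 < M"
begin

definition N :: nat where "N = nat (2 * M)"

text \<open>\<open>M + 1\<close> and \<open>M\<close> are the idempotents of \<open>\<int>\<^sub>2\<^sub>M \<cong> \<int>\<^sub>2 \<times> \<int>\<^sub>M\<close>, so
  \<open>crt f s\<close> is the residue congruent to \<open>f\<close> modulo 2 and to \<open>s\<close> modulo \<open>M\<close>.\<close>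
definition crt :: "int \<Rightarrow> int \<Rightarrow> nat" where
  "crt f s = nat ((s * (M + 1) + f * M) mod (2 * M))"

lemma int_N: "int N = 2 * M"
  using M_pos by (simp add: N_def)

lemma int_crt: "int (crt f s) = (s * (M + 1) + f * M) mod (2 * M)"
  using M_pos by (simp add: crt_def)

lemma crt_less_N: "crt f s < N"
  using M_pos by (simp add: crt_def N_def nat_less_eq_zless)

lemma dvd_2M_iff: "2 * M dvd a \<longleftrightarrow> even a \<and> M dvd a"
proof
  assume "even a \<and> M dvd a"
  moreover have "coprime 2 M" using odd_M by simp
  ultimately show "2 * M dvd a" by (auto intro: divides_mult)
qed (auto intro: dvd_mult_left dvd_mult_right)

lemma crt_eq_iff:
  assumes "d < N"
  shows "crt f s = d \<longleftrightarrow> even (f - int d) \<and> M dvd s - int d"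
proof -
  define X where "X = s * (M + 1) + f * M"
  have "int d mod (2 * M) = int d"
    using assms int_N by simp
  then have "crt f s = d \<longleftrightarrow> X mod (2 * M) = int d mod (2 * M)"
    by (metis X_def int_crt of_nat_eq_iff)
  also have "\<dots> \<longleftrightarrow> even (X - int d) \<and> M dvd X - int d"
    by (simp add: mod_eq_dvd_iff dvd_2M_iff)
  also have "even (X - int d) \<longleftrightarrow> even (f - int d)"
    using odd_M by (simp add: X_def)
  also have "M dvd X - int d \<longleftrightarrow> M dvd s - int d"
  proof -
    have "X - int d = (s - int d) + M * (s + f)" by (simp add: X_def algebra_simps)
    then show ?thesis by (metis dvd_add_left_iff dvd_triv_left)
  qed
  finally show ?thesis .
qed

lemma N_pos: "0 < N"
  using M_pos by (simp add: N_def)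

lemma crt_eq_0_iff: "crt f s = 0 \<longleftrightarrow> even f \<and> M dvd s"
  using crt_eq_iff[OF N_pos] by simp

lemma crt_cong:
  assumes "even (f - f')" "M dvd s - s'"
  shows "crt f s = crt f' s'"
proof -
  define d where "d = int (crt f' s')"
  have "even (f' - d)" "M dvd s' - d"
    using crt_eq_iff[OF crt_less_N[of f' s'], of f' s'] by (simp_all add: d_def)
  moreover have "f - d = (f - f') + (f' - d)" "s - d = (s - s') + (s' - d)"
    by simp_all
  ultimately have "even (f - d)" "M dvd s - d"
    using assms by (metis dvd_add)+
  then show ?thesis
    using crt_eq_iff[OF crt_less_N[of f' s'], of f s] by (simp add: d_def)
qed

lemma zdiff_crt: "zdiff N (crt f s) (crt f' s') = crt (f - f') (s - s')"
proof -
  have "int (zdiff N (crt f s) (crt f' s')) = (int (crt f s) - int (crt f' s')) mod (2 * M)"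
    using crt_less_N[of f' s'] int_N
    by (simp add: zdiff_def zmod_int of_nat_diff) (metis add_diff_eq diff_add_eq mod_add_self2)
  also have "\<dots> = ((s - s') * (M + 1) + (f - f') * M) mod (2 * M)"
    by (simp add: int_crt mod_diff_eq algebra_simps)
  finally show ?thesis
    by (metis int_crt of_nat_eq_iff)
qed

lemma crt_nonzero: "(M dvd s \<Longrightarrow> odd f) \<Longrightarrow> crt f s \<noteq> 0"
  using crt_eq_0_iff by blast

lemma crt_attains:
  assumes "d < N" "M dvd s - int d" "M dvd s' - int d" "odd (f + f')"
  shows "crt f s = d \<or> crt f' s' = d"
proof -
  have "even (f - int d) \<or> even (f' - int d)"
    using \<open>odd (f + f')\<close> by auto
  then show ?thesis
    using assms(2,3) crt_eq_iff[OF assms(1)] by blast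
qed

text \<open>The only nonzero multiple of \<open>M\<close> below \<open>N\<close> is \<open>M\<close> itself, which is odd.\<close>
lemma crt_attains_nonzero:
  assumes "0 < d" "d < N" "M dvd s - int d" "M dvd s' - int d"
    and "\<not> M dvd int d \<Longrightarrow> odd (f + f')" and "M dvd int d \<Longrightarrow> odd f"
  shows "crt f s = d \<or> crt f' s' = d"
proof (cases "M dvd int d")
  case True
  then obtain c where c: "int d = M * c" by blast
  have "int d < int N" using \<open>d < N\<close> by simp
  then have "0 < M * c" "M * c < M * 2"
    using c \<open>0 < d\<close> int_N by linarith+
  then have "0 < c" "c < 2"
    using M_pos by (simp_all add: zero_less_mult_iff)
  then have "int d = M" using c by simp
  then have "even (f - int d)"
    using True assms(6) odd_M by simp
  then show ?thesis
    using assms(3,4) crt_eq_iff[OF assms(2)] by blast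
next
  case False
  then show ?thesis
    using crt_attains assms(2-5) by blast
qed

text \<open>The parity of the representative of \<open>r\<close> in \<open>{1, \<dots>, M}\<close> (not \<open>{0, \<dots>, M - 1}\<close>).\<close>
definition rep_parity :: "int \<Rightarrow> int" where
  "rep_parity r = ((r - 1) mod M + 1) mod 2"

lemma rep_parity_cong:
  assumes "M dvd a - b"
  shows "rep_parity a = rep_parity b"
proof -
  have "(a - 1) mod M = (b - 1) mod M"
    using assms by (simp add: mod_eq_dvd_iff)
  then show ?thesis
    by (simp add: rep_parity_def)
qed

lemma rep_parity_1 [simp]: "rep_parity 1 = 1"
  by (simp add: rep_parity_def)

lemma rep_parity_dvd: "M dvd r \<Longrightarrow> rep_parity r = 1"
  using rep_parity_cong[of r 0] odd_M M_pos by (simp add: rep_parity_def zmod_minus1 odd_iff_mod_2_eq_one)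

lemma rep_parity_succ:
  assumes "\<not> M dvd r"
  shows "odd (rep_parity r + rep_parity (r + 1))"
proof -
  have "r mod M \<noteq> 0" "0 \<le> r mod M" "r mod M < M"
    using assms M_pos by (simp_all add: dvd_eq_mod_eq_0)
  have "(r - 1) mod M = (r mod M - 1) mod M"
    by (rule mod_diff_left_eq[symmetric])
  also have "\<dots> = r mod M - 1"
    using \<open>r mod M \<noteq> 0\<close> \<open>0 \<le> r mod M\<close> \<open>r mod M < M\<close> by (intro mod_pos_pos_trivial) simp_all
  finally have "(r - 1) mod M + 1 = r mod M" by simp
  then show ?thesis
    unfolding rep_parity_def by simp
qed
end

locale dca_construction =
  fixes x u :: int
  assumes x_pos: "1 \<le> x" and x_odd: "odd x"
    and u_inverse: "x^2 + x + 1 dvd (1 - x) * u - 1"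
begin

abbreviation M :: int where "M \<equiv> x^2 + x + 1"

sublocale odd_modulus M
proof
  show "odd M" using x_odd by simp
  show "0 < M" using x_pos by (simp add: add_pos_nonneg)
qed

lemma dvd_cancel_1_minus_x: "M dvd (1 - x) * r \<Longrightarrow> M dvd r"
  using dvd_cancel_unit u_inverse by blast

lemma dvd_cancel_1_minus_x2: "M dvd (1 - x^2) * r \<Longrightarrow> M dvd r"
  by (rule dvd_cancel_unit[of M "1 - x^2" "- x * u"]) (use u_inverse in algebra)

lemma dvd_cancel_x_minus_x2: "M dvd (x - x^2) * r \<Longrightarrow> M dvd r"
  by (rule dvd_cancel_unit[of M "x - x^2" "x^2 * u"]) (use u_inverse in algebra)

lemma rep_parity_neg_x: "rep_parity (- x) = 0"
proof -
  have "x < M" using x_pos by (simp add: power2_eq_square)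
  have "(- x - 1) mod M = (M - x - 1) mod M"
    unfolding mod_eq_dvd_iff by algebra
  also have "\<dots> = M - x - 1"
    using \<open>x < M\<close> x_pos by (intro mod_pos_pos_trivial) simp_all
  finally show ?thesis
    using x_odd by (simp add: rep_parity_def)
qed

definition entry_res :: "nat \<Rightarrow> nat \<Rightarrow> int \<Rightarrow> int" where
  "entry_res j e r = x ^ j * r + (if (j, e) = (1, 1) \<or> (j, e) = (2, 0) then x - x^2 else 0)"

definition entry_bit :: "nat \<Rightarrow> nat \<Rightarrow> int \<Rightarrow> int" where
  "entry_bit j e r =
    (if j = 0 then int e
     else if j = 1 then (if e = 0 then rep_parity r else 1 - rep_parity (r + 1 - x))
     else if e = 0 then rep_parity (r + x^2) else 1 - rep_parity (r + 1))"

definition entry :: "nat \<Rightarrow> nat \<Rightarrow> int \<Rightarrow> nat" where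
  "entry j e r = crt (entry_bit j e r) (entry_res j e r)"

lemma zdiff_entry:
  "zdiff N (entry j e r) (entry j' e r) =
     crt (entry_bit j e r - entry_bit j' e r) (entry_res j e r - entry_res j' e r)"
  by (simp add: entry_def zdiff_crt)

lemma entry_attains:
  assumes "j < 3" "d < N"
  shows "\<exists>e<2. \<exists>r. entry j e r = d"
proof -
  define t where "t = int d"
  obtain r r' where "entry j 0 r = d \<or> entry j 1 r' = d"
  proof -
    consider "j = 0" | "j = 1" | "j = 2" using \<open>j < 3\<close> by linarith
    then show ?thesis
    proof cases
      case 1
      have "crt 0 t = d \<or> crt 1 t = d"
        by (rule crt_attains) (simp_all add: \<open>d < N\<close> t_def)
      then show ?thesis
        using that[of t t] by (auto simp: entry_def entry_bit_def entry_res_def 1)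
    next
      case 2
      have "crt (rep_parity (x^2 * t)) (x * (x^2 * t)) = d \<or>
          crt (1 - rep_parity (x^2 * t)) (x * (x^2 * t - 1 + x) + (x - x^2)) = d"
        by (rule crt_attains) (use \<open>d < N\<close> in \<open>simp_all add: t_def, algebra+\<close>)
      then show ?thesis
        using that[of "x^2 * t" "x^2 * t - 1 + x"] by (auto simp: entry_def entry_bit_def entry_res_def 2)
    next
      case 3
      have "crt (rep_parity (x * t + 1)) (x^2 * (x * t - x^2 + 1) + (x - x^2)) = d \<or>
          crt (1 - rep_parity (x * t + 1)) (x^2 * (x * t)) = d"
        by (rule crt_attains) (use \<open>d < N\<close> in \<open>simp_all add: t_def, algebra+\<close>)
      then show ?thesis
        using that[of "x * t - x^2 + 1" "x * t"] by (auto simp: entry_def entry_bit_def entry_res_def 3 add.commute)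
    qed
  qed
  moreover have "(0::nat) < 2" "(1::nat) < 2" by simp_all
  ultimately show ?thesis by blast
qed

lemma zdiff_entry_attains_by_two_rows:
  assumes "0 < d" "d < N"
    and "M dvd entry_res j 0 r - entry_res j' 0 r - int d"
    and "M dvd entry_res j 1 r' - entry_res j' 1 r' - int d"
    and "\<not> M dvd int d \<Longrightarrow>
      odd (entry_bit j 0 r - entry_bit j' 0 r + (entry_bit j 1 r' - entry_bit j' 1 r'))"
    and "M dvd int d \<Longrightarrow> odd (entry_bit j 0 r - entry_bit j' 0 r)"
  shows "\<exists>e<2. \<exists>r. zdiff N (entry j e r) (entry j' e r) = d"
proof -
  have "zdiff N (entry j 0 r) (entry j' 0 r) = d \<or> zdiff N (entry j 1 r') (entry j' 1 r') = d"
    unfolding zdiff_entry using assms by (rule crt_attains_nonzero)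
  moreover have "(0::nat) < 2" "(1::nat) < 2" by simp_all
  ultimately show ?thesis by blast
qed

lemma zdiff_entry_nonzero:
  assumes "M dvd entry_res j e r - entry_res j' e r \<Longrightarrow> odd (entry_bit j e r - entry_bit j' e r)"
  shows "zdiff N (entry j e r) (entry j' e r) \<noteq> 0"
  unfolding zdiff_entry using assms by (rule crt_nonzero)

lemma entry_res_diff:
  "entry_res 0 0 r - entry_res 1 0 r = (1 - x) * r"
  "entry_res 0 1 r - entry_res 1 1 r = (1 - x) * (r - x)"
  "entry_res 0 0 r - entry_res 2 0 r = (1 - x^2) * r - (x - x^2)"
  "entry_res 0 1 r - entry_res 2 1 r = (1 - x^2) * r"
  "entry_res 1 0 r - entry_res 2 0 r = (x - x^2) * (r - 1)"
  "entry_res 1 1 r - entry_res 2 1 r = (x - x^2) * (r + 1)"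
  by (simp_all add: entry_res_def algebra_simps power2_eq_square)

lemma entry_bit_diff:
  "entry_bit 0 0 r - entry_bit 1 0 r = - rep_parity r"
  "entry_bit 0 1 r - entry_bit 1 1 r = rep_parity (r + 1 - x)"
  "entry_bit 0 0 r - entry_bit 2 0 r = - rep_parity (r + x^2)"
  "entry_bit 0 1 r - entry_bit 2 1 r = rep_parity (r + 1)"
  "entry_bit 1 0 r - entry_bit 2 0 r = rep_parity r - rep_parity (r + x^2)"
  "entry_bit 1 1 r - entry_bit 2 1 r = rep_parity (r + 1) - rep_parity (r + 1 - x)"
  by (simp_all add: entry_bit_def)

lemma zdiff_entry_01_nonzero:
  assumes "e < 2"
  shows "zdiff N (entry 0 e r) (entry 1 e r) \<noteq> 0"
proof (rule zdiff_entry_nonzero)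
  assume dvd: "M dvd entry_res 0 e r - entry_res 1 e r"
  consider "e = 0" | "e = 1" using assms by linarith
  then show "odd (entry_bit 0 e r - entry_bit 1 e r)"
  proof cases
    case 1
    have "M dvd (1 - x) * r"
      using dvd unfolding 1 entry_res_diff .
    then have "rep_parity r = 1"
      by (rule rep_parity_dvd[OF dvd_cancel_1_minus_x])
    then show ?thesis
      unfolding 1 entry_bit_diff by simp
  next
    case 2
    have "M dvd (1 - x) * (r - x)"
      using dvd unfolding 2 entry_res_diff .
    then have "M dvd r - x"
      by (rule dvd_cancel_1_minus_x)
    then have "M dvd (r + 1 - x) - 1"
      by simp
    then have "rep_parity (r + 1 - x) = rep_parity 1"
      by (rule rep_parity_cong)
    then show ?thesis
      unfolding 2 entry_bit_diff by simp
  qed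
qed

lemma zdiff_entry_01_attains:
  assumes "0 < d" "d < N"
  shows "\<exists>e<2. \<exists>r. zdiff N (entry 0 e r) (entry 1 e r) = d"
proof -
  define v where "v = u * int d"
  have v: "M dvd (1 - x) * v - int d"
    unfolding v_def using u_inverse by algebra
  show ?thesis
  proof (rule zdiff_entry_attains_by_two_rows[OF assms, where r = v and r' = "v + x"])
    show "M dvd entry_res 0 0 v - entry_res 1 0 v - int d"
      "M dvd entry_res 0 1 (v + x) - entry_res 1 1 (v + x) - int d"
      using v unfolding entry_res_diff by simp_all
    show "odd (entry_bit 0 0 v - entry_bit 1 0 v + (entry_bit 0 1 (v + x) - entry_bit 1 1 (v + x)))"
      if "\<not> M dvd int d"
    proof -
      have "\<not> M dvd v"
        using v that by (rule not_dvd_factor)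
      then show ?thesis
        using rep_parity_succ[of v] unfolding entry_bit_diff by simp
    qed
    show "odd (entry_bit 0 0 v - entry_bit 1 0 v)" if "M dvd int d"
      using that rep_parity_dvd[of v] unfolding entry_bit_diff by (simp add: v_def)
  qed
qed

lemma zdiff_entry_02_nonzero:
  assumes "e < 2"
  shows "zdiff N (entry 0 e r) (entry 2 e r) \<noteq> 0"
proof (rule zdiff_entry_nonzero)
  assume dvd: "M dvd entry_res 0 e r - entry_res 2 e r"
  consider "e = 0" | "e = 1" using assms by linarith
  then show "odd (entry_bit 0 e r - entry_bit 2 e r)"
  proof cases
    case 1
    have "M dvd (1 - x^2) * r - (x - x^2)"
      using dvd unfolding 1 entry_res_diff .
    moreover have "(1 - x^2) * (r + x^2) = ((1 - x^2) * r - (x - x^2)) + M * (x - x^2)"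
      by algebra
    ultimately have "M dvd (1 - x^2) * (r + x^2)"
      by (metis dvd_add dvd_triv_left)
    then have "rep_parity (r + x^2) = 1"
      by (rule rep_parity_dvd[OF dvd_cancel_1_minus_x2])
    then show ?thesis
      unfolding 1 entry_bit_diff by simp
  next
    case 2
    have "M dvd (1 - x^2) * r"
      using dvd unfolding 2 entry_res_diff .
    then have "M dvd r"
      by (rule dvd_cancel_1_minus_x2)
    then have "M dvd (r + 1) - 1"
      by simp
    then have "rep_parity (r + 1) = rep_parity 1"
      by (rule rep_parity_cong)
    then show ?thesis
      unfolding 2 entry_bit_diff by simp
  qed
qed

lemma zdiff_entry_02_attains:
  assumes "0 < d" "d < N"
  shows "\<exists>e<2. \<exists>r. zdiff N (entry 0 e r) (entry 2 e r) = d"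
proof -
  define v where "v = - x * u * int d"
  have v: "M dvd (1 - x^2) * v - int d"
    unfolding v_def using u_inverse by algebra
  show ?thesis
  proof (rule zdiff_entry_attains_by_two_rows[OF assms, where r = "v - x^2" and r' = v])
    show "M dvd entry_res 0 0 (v - x^2) - entry_res 2 0 (v - x^2) - int d"
      using v unfolding entry_res_diff by algebra
    show "M dvd entry_res 0 1 v - entry_res 2 1 v - int d"
      using v unfolding entry_res_diff .
    show "odd (entry_bit 0 0 (v - x^2) - entry_bit 2 0 (v - x^2) + (entry_bit 0 1 v - entry_bit 2 1 v))"
      if "\<not> M dvd int d"
      using rep_parity_succ[OF not_dvd_factor[OF v that]] unfolding entry_bit_diff by simp
    show "odd (entry_bit 0 0 (v - x^2) - entry_bit 2 0 (v - x^2))" if "M dvd int d"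
      using that rep_parity_dvd[of v] unfolding entry_bit_diff by (simp add: v_def)
  qed
qed

lemma zdiff_entry_12_nonzero:
  assumes "e < 2"
  shows "zdiff N (entry 1 e r) (entry 2 e r) \<noteq> 0"
proof (rule zdiff_entry_nonzero)
  assume dvd: "M dvd entry_res 1 e r - entry_res 2 e r"
  consider "e = 0" | "e = 1" using assms by linarith
  then show "odd (entry_bit 1 e r - entry_bit 2 e r)"
  proof cases
    case 1
    have "M dvd (x - x^2) * (r - 1)"
      using dvd unfolding 1 entry_res_diff .
    then have r: "M dvd r - 1"
      by (rule dvd_cancel_x_minus_x2)
    then have "rep_parity r = rep_parity 1"
      by (rule rep_parity_cong)
    moreover have "rep_parity (r + x^2) = rep_parity (- x)"
      using r by (intro rep_parity_cong) algebra
    ultimately show ?thesis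
      unfolding 1 entry_bit_diff by (simp add: rep_parity_neg_x)
  next
    case 2
    have "M dvd (x - x^2) * (r + 1)"
      using dvd unfolding 2 entry_res_diff .
    then have r: "M dvd r + 1"
      by (rule dvd_cancel_x_minus_x2)
    then have "rep_parity (r + 1) = 1"
      by (rule rep_parity_dvd)
    moreover have "rep_parity (r + 1 - x) = rep_parity (- x)"
      using r by (intro rep_parity_cong) simp
    ultimately show ?thesis
      unfolding 2 entry_bit_diff by (simp add: rep_parity_neg_x)
  qed
qed

lemma zdiff_entry_12_attains:
  assumes "0 < d" "d < N"
  shows "\<exists>e<2. \<exists>r. zdiff N (entry 1 e r) (entry 2 e r) = d"
proof -
  define v where "v = x^2 * u * int d"
  have v: "M dvd (x - x^2) * v - int d"
    unfolding v_def using u_inverse by algebra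
  have shift: "rep_parity (v + 1 + x^2) = rep_parity (v - x)"
    by (rule rep_parity_cong) algebra
  show ?thesis
  proof (rule zdiff_entry_attains_by_two_rows[OF assms, where r = "v + 1" and r' = "v - 1"])
    show "M dvd entry_res 1 0 (v + 1) - entry_res 2 0 (v + 1) - int d"
      "M dvd entry_res 1 1 (v - 1) - entry_res 2 1 (v - 1) - int d"
      using v unfolding entry_res_diff by simp_all
    show "odd (entry_bit 1 0 (v + 1) - entry_bit 2 0 (v + 1) + (entry_bit 1 1 (v - 1) - entry_bit 2 1 (v - 1)))"
      if "\<not> M dvd int d"
      using rep_parity_succ[OF not_dvd_factor[OF v that]] shift unfolding entry_bit_diff by simp
    show "odd (entry_bit 1 0 (v + 1) - entry_bit 2 0 (v + 1))" if "M dvd int d"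
    proof -
      have "M dvd v" using that by (simp add: v_def)
      then have "rep_parity (v + 1) = rep_parity 1"
        by (intro rep_parity_cong) simp
      moreover have "M dvd v + M"
        using \<open>M dvd v\<close> by simp
      then have "rep_parity (v + 1 + x^2) = rep_parity (- x)"
        by (intro rep_parity_cong) (simp add: algebra_simps)
      ultimately show ?thesis
        unfolding entry_bit_diff by (simp add: rep_parity_neg_x)
    qed
  qed
qed

lemma entry_less_N: "entry j e r < N"
  by (simp add: entry_def crt_less_N)

lemma entry_neq:
  assumes "j < 3" "j' < 3" "j \<noteq> j'" "e < 2"
  shows "entry j e r \<noteq> entry j' e r"
proof -
  have "entry 0 e r \<noteq> entry 1 e r" "entry 0 e r \<noteq> entry 2 e r" "entry 1 e r \<noteq> entry 2 e r"
    using zdiff_entry_01_nonzero zdiff_entry_02_nonzero zdiff_entry_12_nonzero \<open>e < 2\<close>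
    by (metis entry_less_N zdiff_eq_0_iff)+
  moreover have "(j, j') \<in> {(0, 1), (0, 2), (1, 2), (1, 0), (2, 0), (2, 1)}"
    using assms(1-3) by (auto simp: less_Suc_eq numeral_3_eq_3)
  ultimately show ?thesis
    by auto
qed

lemma zdiff_entry_attains:
  assumes "j < 3" "j' < 3" "j \<noteq> j'" "0 < d" "d < N"
  shows "\<exists>e<2. \<exists>r. zdiff N (entry j e r) (entry j' e r) = d"
proof -
  have swap: "\<exists>e<2. \<exists>r. zdiff N (entry b e r) (entry a e r) = d"
    if "a < 3" "b < 3" "a \<noteq> b"
      and attains: "\<And>d'. 0 < d' \<Longrightarrow> d' < N \<Longrightarrow> \<exists>e<2. \<exists>r. zdiff N (entry a e r) (entry b e r) = d'"
    for a b
  proof -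
    obtain e r where "e < 2" "zdiff N (entry a e r) (entry b e r) = N - d"
      using attains[of "N - d"] assms(4,5) by auto
    moreover have "zdiff N (entry b e r) (entry a e r) = N - zdiff N (entry a e r) (entry b e r)"
      using entry_neq[OF that(1-3) \<open>e < 2\<close>] entry_less_N by (intro zdiff_swap)
    ultimately show ?thesis
      using assms(5) by auto
  qed
  have "(j, j') \<in> {(0, 1), (0, 2), (1, 2), (1, 0), (2, 0), (2, 1)}"
    using assms(1-3) by (auto simp: less_Suc_eq numeral_3_eq_3)
  then show ?thesis
    using zdiff_entry_01_attains zdiff_entry_02_attains zdiff_entry_12_attains assms(4,5)
      swap[of 0 1] swap[of 0 2] swap[of 1 2] by auto
qed

lemma entry_cong:
  assumes "M dvd r - r'"
  shows "entry j e r = entry j e r'"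
proof -
  have "entry_bit j e r = entry_bit j e r'"
    using assms by (auto simp: entry_bit_def intro!: rep_parity_cong)
  moreover have "entry_res j e r - entry_res j e r' = x ^ j * (r - r')"
    by (simp add: entry_res_def algebra_simps)
  ultimately show ?thesis
    using assms unfolding entry_def by (intro crt_cong) simp_all
qed

definition dca_matrix :: "nat \<Rightarrow> nat \<Rightarrow> nat" where
  "dca_matrix R j = (if R < N \<and> j < 3 then entry j (R div nat M) (int (R mod nat M)) else 0)"

lemma N_eq_double: "N = 2 * nat M"
  using M_pos by (simp add: N_def nat_mult_distrib)

lemma dca_matrix_row:
  assumes "R < N"
  shows "\<exists>e<2. \<exists>r. \<forall>j<3. dca_matrix R j = entry j e r"
proof -
  have "R div nat M < 2"
    using assms by (simp add: N_eq_double less_mult_imp_div_less)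
  then show ?thesis
    using assms by (auto simp: dca_matrix_def)
qed

lemma dca_matrix_row_exists:
  assumes "e < 2"
  shows "\<exists>R<N. \<forall>j<3. dca_matrix R j = entry j e r"
proof -
  define R where "R = e * nat M + nat (r mod M)"
  have "0 \<le> r mod M" "r mod M < M"
    using pos_mod_sign[OF M_pos] pos_mod_bound[OF M_pos] by blast+
  then have r: "nat (r mod M) < nat M" "int (nat (r mod M)) = r mod M"
    by simp_all
  then have "R div nat M = e" "R mod nat M = nat (r mod M)"
    by (simp_all add: R_def)
  moreover have "R < N"
  proof -
    have "e * nat M \<le> 1 * nat M"
      using assms by (intro mult_right_mono) simp_all
    then show ?thesis
      using r(1) unfolding R_def N_eq_double by linarith
  qed
  moreover have "entry j e (r mod M) = entry j e r" for j
    by (rule entry_cong) (simp add: mod_eq_dvd_iff[symmetric])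
  ultimately show ?thesis
    using r(2) by (auto simp: dca_matrix_def)
qed

lemma dca_matrix_less_N: "dca_matrix R j < N"
  using N_pos by (simp add: dca_matrix_def entry_less_N)

lemma dca_matrix_column_attains:
  assumes "j < 3" "d < N"
  shows "\<exists>R<N. dca_matrix R j = d"
  using entry_attains[OF assms] dca_matrix_row_exists assms(1) by metis

lemma dca_matrix_zdiff_attains:
  assumes "j < 3" "j' < 3" "j \<noteq> j'" "0 < d" "d < N"
  shows "\<exists>R<N. zdiff N (dca_matrix R j) (dca_matrix R j') = d"
  using zdiff_entry_attains[OF assms] dca_matrix_row_exists assms(1,2) by metis

lemma dca_matrix_zdiff_nonzero:
  assumes "j < 3" "j' < 3" "j \<noteq> j'" "R < N"
  shows "zdiff N (dca_matrix R j) (dca_matrix R j') \<noteq> 0"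
proof -
  obtain e r where "e < 2" "\<forall>j<3. dca_matrix R j = entry j e r"
    using dca_matrix_row[OF \<open>R < N\<close>] by blast
  then show ?thesis
    using entry_neq[OF assms(1-3) \<open>e < 2\<close>] entry_less_N assms(1,2)
    by (simp add: zdiff_eq_0_iff)
qed

lemma dca_matrix_covers:
  assumes "j < 4" "j' < 4" "j \<noteq> j'" "d < N"
  shows "\<exists>R<N + 1. zdiff N (dca_matrix R j) (dca_matrix R j') = d"
proof -
  have zero: "dca_matrix R 3 = 0" "dca_matrix N j = 0" for R j
    by (simp_all add: dca_matrix_def)
  consider "j = 3" "j' < 3" | "j' = 3" "j < 3" | "j < 3" "j' < 3"
    using assms(1-3) by linarith
  then show ?thesis
  proof cases
    case 1
    obtain R where "R < N" "dca_matrix R j' = (N - d) mod N"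
      using dca_matrix_column_attains[OF \<open>j' < 3\<close> mod_less_divisor[OF N_pos]] by blast
    then show ?thesis
      using \<open>j = 3\<close> assms(4) zero by (intro exI[of _ R]) (auto simp: zdiff_def mod_if)
  next
    case 2
    obtain R where "R < N" "dca_matrix R j = d"
      using dca_matrix_column_attains[OF \<open>j < 3\<close> assms(4)] by blast
    then show ?thesis
      using \<open>j' = 3\<close> assms(4) zero by (intro exI[of _ R]) (simp add: zdiff_def)
  next
    case 3
    show ?thesis
    proof (cases "d = 0")
      case True
      then show ?thesis
        using zero by (intro exI[of _ N]) (simp add: zdiff_def)
    next
      case False
      then show ?thesis
        using dca_matrix_zdiff_attains[OF 3 assms(3) _ assms(4)] by (metis gr0I less_SucI Suc_eq_plus1)
    qed
  qed
qed

lemma dca_matrix_P1: "DCA_P1 4 (N + 1) dca_matrix"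
  unfolding DCA_P1_def
proof (intro allI impI)
  fix j :: nat
  assume "j < 4"
  obtain R where "R < N" "dca_matrix R j = 0"
  proof (cases "j = 3")
    case True
    then show ?thesis
      using that[of 0] N_pos by (simp add: dca_matrix_def)
  next
    case False
    then show ?thesis
      using that dca_matrix_column_attains[of j 0] \<open>j < 4\<close> N_pos by auto
  qed
  then have "{R, N} \<subseteq> {i. i < N + 1 \<and> dca_matrix i j = 0}"
    by (simp add: dca_matrix_def)
  moreover have "card {R, N} = 2"
    using \<open>R < N\<close> by simp
  ultimately show "2 \<le> card {i. i < N + 1 \<and> dca_matrix i j = 0}"
    by (metis card_mono finite_Collect_conjI finite_Collect_less_nat)
qed

lemma dca_matrix_P2: "DCA_P2 4 N dca_matrix"
  unfolding DCA_P2_def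
proof (intro allI impI)
  fix j j' :: nat
  assume "j < 4" "j' < 4" "j \<noteq> j' \<and> j \<noteq> 4 - 1 \<and> j' \<noteq> 4 - 1"
  then have jj: "j < 3" "j' < 3" "j \<noteq> j'" by auto
  show "{zdiff N (dca_matrix i j) (dca_matrix i j') | i. i < N} = {1..<N}"
  proof (intro equalityI subsetI)
    fix z assume "z \<in> {zdiff N (dca_matrix i j) (dca_matrix i j') | i. i < N}"
    then show "z \<in> {1..<N}"
      using dca_matrix_zdiff_nonzero[OF jj] zdiff_less[OF N_pos] by fastforce
  next
    fix z assume "z \<in> {1..<N}"
    then show "z \<in> {zdiff N (dca_matrix i j) (dca_matrix i j') | i. i < N}"
      using dca_matrix_zdiff_attains[OF jj, of z] by auto
  qed
qed

theorem dca_matrix_properties: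
  "normalized_DCA 4 N dca_matrix \<and> DCA_P1 4 (N + 1) dca_matrix \<and> DCA_P2 4 N dca_matrix"
  using dca_matrix_covers dca_matrix_less_N dca_matrix_P1 dca_matrix_P2
  by (auto simp: normalized_DCA_def is_DCA_def dca_matrix_def)

end

lemma inverse_1_minus_x_exists:
  fixes x :: int
  assumes "\<not> 3 dvd x^2 + x + 1"
  shows "\<exists>u. x^2 + x + 1 dvd (1 - x) * u - 1"
proof -
  define g where "g = gcd (1 - x) (x^2 + x + 1)"
  have "3 = (x^2 + x + 1) + (1 - x) * (x + 2)"
    by algebra
  then have "g dvd 3"
    unfolding g_def by (metis dvd_add dvd_mult2 gcd_dvd1 gcd_dvd2)
  then have "g \<le> 3" "g \<noteq> 0" "g \<noteq> 2"
    using zdvd_imp_le[of g 3] by auto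
  moreover have "g \<noteq> 3"
    using assms gcd_dvd2 unfolding g_def by metis
  moreover have "0 \<le> g"
    unfolding g_def by simp
  ultimately have "g = 1"
    by presburger
  obtain u v where "u * (1 - x) + v * (x^2 + x + 1) = g"
    using bezout_int[of "1 - x" "x^2 + x + 1"] unfolding g_def by blast
  then have "(1 - x) * u - 1 = (x^2 + x + 1) * (- v)"
    using \<open>g = 1\<close> by (simp add: algebra_simps)
  then show ?thesis
    by (metis dvd_triv_left)
qed

lemma not_3_dvd_if_mod_3_neq_2:
  fixes i :: nat
  assumes "i mod 3 \<noteq> 2"
  shows "\<not> 3 dvd (2 * int i + 3)^2 + (2 * int i + 3) + 1"
proof -
  have "\<exists>a. i = 3 * a \<or> i = 3 * a + 1"
    using assms by presburger
  then obtain a where "i = 3 * a \<or> i = 3 * a + 1" ..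
  then obtain c where "(2 * int i + 3)^2 + (2 * int i + 3) + 1 = 3 * c + 1"
  proof
    assume "i = 3 * a"
    then show ?thesis
      by (intro that[of "12 * int a^2 + 14 * int a + 4"]) (simp add: power2_eq_square algebra_simps)
  next
    assume "i = 3 * a + 1"
    then show ?thesis
      by (intro that[of "12 * int a^2 + 22 * int a + 10"]) (simp add: power2_eq_square algebra_simps)
  qed
  then show ?thesis
    by presburger
qed

theorem normalized_DCA_4_exists:
  fixes x :: int
  assumes "1 \<le> x" "odd x" "\<not> 3 dvd x^2 + x + 1"
  defines "n \<equiv> nat (2 * (x^2 + x + 1))"
  shows "\<exists>Q. normalized_DCA 4 n Q \<and> DCA_P1 4 (n + 1) Q \<and> DCA_P2 4 n Q"
proof -
  obtain u where "x^2 + x + 1 dvd (1 - x) * u - 1"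
    using inverse_1_minus_x_exists[OF assms(3)] by blast
  then interpret dca_construction x u
    using assms(1,2) by unfold_locales
  show ?thesis
    using dca_matrix_properties unfolding n_def N_def by blast
qed

theorem mainTheorem19:
  fixes i k m :: nat
  assumes "i mod 3 \<noteq> 2"
    and "k = 2 * i ^ 2 + 7 * i + 6"
    and "m = 2 * k + 1"
  shows "\<exists>Q. normalized_DCA 4 (2 * m) Q \<and> DCA_P1 4 (2 * m + 1) Q \<and> DCA_P2 4 (2 * m) Q"
proof -
  define x :: int where "x = 2 * int i + 3"
  have "x^2 + x + 1 = int m"
    using assms(2,3) by (simp add: x_def power2_eq_square algebra_simps)
  moreover have "1 \<le> x" "odd x" "\<not> 3 dvd x^2 + x + 1"
    using not_3_dvd_if_mod_3_neq_2[OF assms(1)] by (simp_all add: x_def)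
  ultimately show ?thesis
    using normalized_DCA_4_exists[of x] by (simp add: nat_mult_distrib)
qed

end
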